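(* Let $(Z, S(1), S(0), Y(1), Y(0), \mathbf{X})$ be random variables with $Z\in\{0,1\}$, $S(z)\in\{0,1\}$, $Y(z)$ real-valued, $\mathbf{X}$ a covariate vector, observed $S=S(Z)$, $Y=Y(Z)$, and assume Randomization: $Z \perp\!\!\!\perp \{S(1),S(0),Y(1),Y(0),\mathbf{X}\}$. Assume Monotonicity ($S(1)\ge S(0)$ a.s.) and General Principal Ignorability ($Y(z)\perp\!\!\!\perp U\mid \mathbf{X}$ for $z=0,1$). Then for all fixed vectors $\boldsymbol{\beta}_{1,s\bar{s}},\boldsymbol{\beta}_{0,s\bar{s}}$ of the same dimension as $\mathbf{X}$, $$E\{Y(1)-\boldsymbol{\beta}_{1,s\bar{s}}^\top\mathbf{X}\mid U=s\bar{s}\} = E\{w_{1,s\bar{s}}(\mathbf{X})(Y-\boldsymbol{\beta}_{1,s\bar{s}}^\top\mathbf{X})\mid Z=1,S=1\},$$ $$E\{Y(0)-\boldsymbol{\beta}_{0,s\bar{s}}^\top\mathbf{X}\mid U=s\bar{s}\} = E\{w_{0,s\bar{s}}(\mathbf{X})(Y-\boldsymbol{\beta}_{0,s\bar{s}}^\top\mathbf{X})\mid Z=0,S=0\},$$ $$E(\mathbf{X}\mid U=s\bar{s}) = E\{w_{1,s\bar{s}}(\mathbf{X})\mathbf{X}\mid Z=1,S=1\} = E\{w_{0,s\bar{s}}(\mathbf{X})\mathbf{X}\mid Z=0,S=0\},$$ where $w_{1,s\bar{s}}(\mathbf{X}) = \frac{e_{s\bar{s}}(\mathbf{X})}{e_{s\bar{s}}(\mathbf{X})+e_{ss}(\mathbf{X})}\Big/\frac{\pi_{s\bar{s}}}{\pi_{s\bar{s}}+\pi_{ss}}$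 and $w_{0,s\bar{s}}(\mathbf{X}) = \frac{e_{s\bar{s}}(\mathbf{X})}{e_{s\bar{s}}(\mathbf{X})+e_{\bar{s}\bar{s}}(\mathbf{X})}\Big/\frac{\pi_{s\bar{s}}}{\pi_{s\bar{s}}+\pi_{\bar{s}\bar{s}}}$.
   Context: The principal stratum is $U=(S(1),S(0))$, whose values $(1,1),(1,0),(0,1),(0,0)$ are labelled $ss, s\bar{s}, \bar{s}s, \bar{s}\bar{s}$. Principal scores: $e_u(\mathbf{X}) = \Pr(U=u\mid \mathbf{X})$; proportions $\pi_u=\Pr(U=u)$. All expectations are assumed to exist and all conditioning events and denominators to be positive. *)

theory Defs
  imports "HOL-Probability.Probability"
begin

definition observed :: "('a \<Rightarrow> real) \<Rightarrow> ('a \<Rightarrow> 'b) \<Rightarrow> ('a \<Rightarrow> 'b) \<Rightarrow> 'a \<Rightarrow> 'b" where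
  "observed Z A1 A0 = (\<lambda>\<omega>. if Z \<omega> = 1 then A1 \<omega> else A0 \<omega>)"

definition cexp_event :: "'a measure \<Rightarrow> ('a \<Rightarrow> 'b::{banach,second_countable_topology}) \<Rightarrow> 'a set \<Rightarrow> 'b" where
  "cexp_event M f A = (\<integral>\<omega>. indicator A \<omega> *\<^sub>R f \<omega> \<partial>M) /\<^sub>R measure M A"

definition stratum :: "'a measure \<Rightarrow> ('a \<Rightarrow> real) \<Rightarrow> ('a \<Rightarrow> real) \<Rightarrow> real \<Rightarrow> real \<Rightarrow> 'a set" where
  "stratum M S1 S0 s1 s0 = {\<omega> \<in> space M. S1 \<omega> = s1 \<and> S0 \<omega> = s0}"

definition principal_score :: "'a measure \<Rightarrow> ('a \<Rightarrow> 'x::topological_space) \<Rightarrow> ('a \<Rightarrow> real) \<Rightarrow> ('a \<Rightarrow> real) \<Rightarrow> real \<Rightarrow> real \<Rightarrow> 'a \<Rightarrow> real" where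
  "principal_score M X S1 S0 s1 s0 =
     real_cond_exp M (vimage_algebra (space M) X borel) (indicator (stratum M S1 S0 s1 s0))"

definition principal_prop :: "'a measure \<Rightarrow> ('a \<Rightarrow> real) \<Rightarrow> ('a \<Rightarrow> real) \<Rightarrow> real \<Rightarrow> real \<Rightarrow> real" where
  "principal_prop M S1 S0 s1 s0 = measure M (stratum M S1 S0 s1 s0)"

definition cond_indep :: "'a measure \<Rightarrow> ('a \<Rightarrow> 'x::topological_space) \<Rightarrow> ('a \<Rightarrow> 'v::topological_space) \<Rightarrow> ('a \<Rightarrow> 'w::topological_space) \<Rightarrow> bool" where
  "cond_indep M X V W \<longleftrightarrow>
     (\<forall>A\<in>sets borel. \<forall>B\<in>sets borel. AE \<omega> in M.
        real_cond_exp M (vimage_algebra (space M) X borel) (\<lambda>\<omega>. indicator A (V \<omega>) * indicator B (W \<omega>)) \<omega>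
        = real_cond_exp M (vimage_algebra (space M) X borel) (\<lambda>\<omega>. indicator A (V \<omega>)) \<omega>
        * real_cond_exp M (vimage_algebra (space M) X borel) (\<lambda>\<omega>. indicator B (W \<omega>)) \<omega>)"

text \<open>Independence of two random variables with possibly different (Borel) codomains,
  as independence of the generated sigma-algebras (cf. indep_var_eq).\<close>
definition indep_rv :: "'a measure \<Rightarrow> ('a \<Rightarrow> 'b::topological_space) \<Rightarrow> ('a \<Rightarrow> 'c::topological_space) \<Rightarrow> bool" where
  "indep_rv M V W \<longleftrightarrow>
     prob_space.indep_set M
       (sigma_sets (space M) {V -` A \<inter> space M | A. A \<in> sets borel})
       (sigma_sets (space M) {W -` A \<inter> space M | A. A \<in> sets borel})"

end

theory Submission
  imports Defs
begin

text \<open>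
  Write U = (S1, S0). The observed cell {Z = 1, S = 1} is {Z = 1} \<inter> {U \<in> {(1,0), (1,1)}}, and
  randomization makes {Z = 1} independent of (U, Y(1), X), so averaging over the cell is averaging over
  the pooled strata {U \<in> {(1,0), (1,1)}}. Principal ignorability lets an indicator of U be replaced by its
  conditional expectation given X inside any integral against a function of (X, Y(1)). For the pooled
  indicator that conditional expectation is e_(1,0) + e_(1,1), which the weight w1 turns into
  (\<pi>_(1,0) + \<pi>_(1,1)) / \<pi>_(1,0) \<cdot> e_(1,0); undoing the replacement for the indicator of (1,0) alone and
  dividing by P(cell) = P(Z = 1) (\<pi>_(1,0) + \<pi>_(1,1)) gives the claim. The arm Z = 0 is the same with
  (0,0) in place of (1,1), and the covariate identities are the coordinatewise instances without outcome.
\<close>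

definition pair_rectangles ::
    "'a measure \<Rightarrow> ('a \<Rightarrow> 'x::topological_space) \<Rightarrow> ('a \<Rightarrow> 'y::topological_space) \<Rightarrow> 'a set set" where
  "pair_rectangles M X Y = {X -` C \<inter> Y -` A \<inter> space M | C A. C \<in> sets borel \<and> A \<in> sets borel}"

definition sigma_pair ::
    "'a measure \<Rightarrow> ('a \<Rightarrow> 'x::topological_space) \<Rightarrow> ('a \<Rightarrow> 'y::topological_space) \<Rightarrow> 'a measure" where
  "sigma_pair M X Y = sigma (space M) (pair_rectangles M X Y)"

lemma pair_rectanglesI:
  "C \<in> sets borel \<Longrightarrow> A \<in> sets borel \<Longrightarrow> X -` C \<inter> Y -` A \<inter> space M \<in> pair_rectangles M X Y"
  unfolding pair_rectangles_def by blast

lemma pair_rectangles_subset: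
  "X \<in> borel_measurable M \<Longrightarrow> Y \<in> borel_measurable M \<Longrightarrow> pair_rectangles M X Y \<subseteq> sets M"
  unfolding pair_rectangles_def by auto

lemma Int_stable_pair_rectangles: "Int_stable (pair_rectangles M X Y)"
proof (rule Int_stableI)
  fix D D' assume "D \<in> pair_rectangles M X Y" "D' \<in> pair_rectangles M X Y"
  then obtain C A C' A' where "D = X -` C \<inter> Y -` A \<inter> space M" "D' = X -` C' \<inter> Y -` A' \<inter> space M"
    and "C \<in> sets borel" "A \<in> sets borel" "C' \<in> sets borel" "A' \<in> sets borel"
    unfolding pair_rectangles_def by blast
  then have "D \<inter> D' = X -` (C \<inter> C') \<inter> Y -` (A \<inter> A') \<inter> space M"
    and "C \<inter> C' \<in> sets borel" "A \<inter> A' \<in> sets borel" by auto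
  then show "D \<inter> D' \<in> pair_rectangles M X Y" unfolding pair_rectangles_def by blast
qed

lemma space_sigma_pair [simp]: "space (sigma_pair M X Y) = space M"
  unfolding sigma_pair_def pair_rectangles_def by (rule space_measure_of) auto

lemma sets_sigma_pair: "sets (sigma_pair M X Y) = sigma_sets (space M) (pair_rectangles M X Y)"
  unfolding sigma_pair_def pair_rectangles_def by (rule sets_measure_of) auto

lemma subalgebra_sigma_pair:
  assumes "X \<in> borel_measurable M" "Y \<in> borel_measurable M"
  shows "subalgebra M (sigma_pair M X Y)"
  using sets.sigma_sets_subset[OF pair_rectangles_subset[OF assms]]
  unfolding subalgebra_def sets_sigma_pair by simp

lemma
  fixes X :: "'a \<Rightarrow> 'x::topological_space" and Y :: "'a \<Rightarrow> 'y::topological_space"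
  shows measurable_sigma_pair1: "X \<in> borel_measurable (sigma_pair M X Y)"
    and measurable_sigma_pair2: "Y \<in> borel_measurable (sigma_pair M X Y)"
proof -
  have rectangle: "X -` C \<inter> Y -` A \<inter> space M \<in> sets (sigma_pair M X Y)"
    if "C \<in> sets borel" "A \<in> sets borel" for C A
    unfolding sets_sigma_pair using that by (intro sigma_sets.Basic pair_rectanglesI)
  show "X \<in> borel_measurable (sigma_pair M X Y)"
    using rectangle[where A = UNIV] by (intro measurableI) (auto simp: Int_commute)
  show "Y \<in> borel_measurable (sigma_pair M X Y)"
    using rectangle[where C = UNIV] by (intro measurableI) auto
qed

lemma subalgebra_vimage_algebra:
  "X \<in> measurable N borel \<Longrightarrow> subalgebra N (vimage_algebra (space N) X borel)"
  unfolding subalgebra_def by (simp add: sets_image_in_sets)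

lemma measurable_vimage_algebra_continuous:
  "continuous_on UNIV h \<Longrightarrow> (\<lambda>\<omega>. h (T \<omega>)) \<in> borel_measurable (vimage_algebra (space M) T borel)"
  by (rule measurable_compose[OF measurable_vimage_algebra1 borel_measurable_continuous_onI]) auto

lemma integral_indicator_eq_sigma_sets:
  fixes f g :: "'a \<Rightarrow> real"
  assumes E: "Int_stable E" "E \<subseteq> sets M"
    and f: "integrable M f" and g: "integrable M g"
    and total: "(\<integral>\<omega>. f \<omega> \<partial>M) = (\<integral>\<omega>. g \<omega> \<partial>M)"
    and gen: "\<And>D. D \<in> E \<Longrightarrow> (\<integral>\<omega>. indicator D \<omega> * f \<omega> \<partial>M) = (\<integral>\<omega>. indicator D \<omega> * g \<omega> \<partial>M)"
    and D: "D \<in> sigma_sets (space M) E"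
  shows "(\<integral>\<omega>. indicator D \<omega> * f \<omega> \<partial>M) = (\<integral>\<omega>. indicator D \<omega> * g \<omega> \<partial>M)"
proof -
  have sets: "sigma_sets (space M) E \<subseteq> sets M"
    using E(2) by (rule sets.sigma_sets_subset)
  have integral_compl: "(\<integral>\<omega>. indicator (space M - D) \<omega> * h \<omega> \<partial>M) = (\<integral>\<omega>. h \<omega> \<partial>M) - (\<integral>\<omega>. indicator D \<omega> * h \<omega> \<partial>M)"
    if "D \<in> sets M" "integrable M h" for D and h :: "'a \<Rightarrow> real"
  proof -
    have "(\<integral>\<omega>. indicator (space M - D) \<omega> * h \<omega> \<partial>M) = (\<integral>\<omega>. h \<omega> - indicator D \<omega> * h \<omega> \<partial>M)"
      by (rule Bochner_Integration.integral_cong) (auto simp: indicator_def)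
    also have "\<dots> = (\<integral>\<omega>. h \<omega> \<partial>M) - (\<integral>\<omega>. indicator D \<omega> * h \<omega> \<partial>M)"
      using that
      by (intro Bochner_Integration.integral_diff) (auto intro: integrable_real_mult_indicator simp: mult.commute)
    finally show ?thesis .
  qed
  have integral_union: "(\<integral>\<omega>. indicator (\<Union>i. A i) \<omega> * h \<omega> \<partial>M) = (\<Sum>i. \<integral>\<omega>. indicator (A i) \<omega> * h \<omega> \<partial>M)"
    if "range A \<subseteq> sets M" "disjoint_family A" "integrable M h" for A :: "nat \<Rightarrow> 'a set" and h :: "'a \<Rightarrow> real"
  proof -
    have "set_integrable M (\<Union>i. A i) h"
      using that unfolding set_integrable_def by (intro integrable_mult_indicator) auto
    with that show ?thesis
      using lebesgue_integral_countable_add[of A M h]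
      by (auto simp: set_lebesgue_integral_def disjoint_family_on_def)
  qed
  from E(1) E(2)[THEN order_trans, OF sets.space_closed] D show ?thesis
  proof (induction rule: sigma_sets_induct_disjoint)
    case (compl D)
    with sets have "D \<in> sets M" by blast
    with compl.IH show ?case by (simp add: integral_compl f g total)
  next
    case (union A)
    with sets have "range A \<subseteq> sets M" by blast
    with union.IH show ?case by (simp add: integral_union union.hyps(1) f g)
  qed (simp_all add: gen)
qed

lemma cond_indep_integral_rectangle:
  fixes X :: "'a \<Rightarrow> 'x::topological_space" and Y :: "'a \<Rightarrow> 'y::topological_space"
    and U :: "'a \<Rightarrow> 'u::topological_space"
  assumes "prob_space M"
    and [measurable]: "X \<in> borel_measurable M" "Y \<in> borel_measurable M" "U \<in> borel_measurable M"
      "B \<in> sets borel" "C \<in> sets borel" "A \<in> sets borel"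
    and ci: "cond_indep M X Y U"
  shows "(\<integral>\<omega>. indicator (X -` C \<inter> Y -` A \<inter> space M) \<omega> * indicator B (U \<omega>) \<partial>M)
       = (\<integral>\<omega>. indicator (X -` C \<inter> Y -` A \<inter> space M) \<omega>
             * real_cond_exp M (vimage_algebra (space M) X borel) (\<lambda>\<omega>. indicator B (U \<omega>)) \<omega> \<partial>M)"
proof -
  interpret prob_space M by fact
  define F where "F = vimage_algebra (space M) X borel"
  interpret F: finite_measure_subalgebra M F
    unfolding F_def by unfold_locales (rule subalgebra_vimage_algebra; simp)
  have [measurable]: "X \<in> borel_measurable F"
    unfolding F_def by (rule measurable_vimage_algebra1) simp
  define f h where "f = (\<lambda>\<omega>. indicator B (U \<omega>) :: real)" and "h = (\<lambda>\<omega>. indicator A (Y \<omega>) :: real)"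
  define eB where "eB = real_cond_exp M F f"
  have [measurable]: "f \<in> borel_measurable M" "h \<in> borel_measurable M"
    unfolding f_def h_def by measurable
  have [measurable]: "eB \<in> borel_measurable F" "eB \<in> borel_measurable M" unfolding eB_def by simp_all
  have int_eB: "integrable M eB"
    unfolding eB_def by (rule F.real_cond_exp_int(1)) (auto intro: integrable_const_bound[where B=1] simp: f_def)
  have factor: "AE \<omega> in M. real_cond_exp M F (\<lambda>\<omega>. h \<omega> * f \<omega>) \<omega> = real_cond_exp M F h \<omega> * eB \<omega>"
    using ci unfolding cond_indep_def F_def eB_def f_def h_def by simp
  have "(\<integral>\<omega>. indicator (X -` C \<inter> Y -` A \<inter> space M) \<omega> * f \<omega> \<partial>M) = (\<integral>\<omega>. indicator C (X \<omega>) * (h \<omega> * f \<omega>) \<partial>M)"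
    by (rule Bochner_Integration.integral_cong) (auto simp: h_def indicator_def)
  also have "\<dots> = (\<integral>\<omega>. indicator C (X \<omega>) * real_cond_exp M F (\<lambda>\<omega>. h \<omega> * f \<omega>) \<omega> \<partial>M)"
    by (rule F.real_cond_exp_intg(2)[symmetric])
      (auto intro!: integrable_const_bound[where B=1] simp: h_def f_def indicator_def)
  also have "\<dots> = (\<integral>\<omega>. (indicator C (X \<omega>) * eB \<omega>) * real_cond_exp M F h \<omega> \<partial>M)"
    by (rule integral_cong_AE) (use factor in auto)
  also have "\<dots> = (\<integral>\<omega>. (indicator C (X \<omega>) * eB \<omega>) * h \<omega> \<partial>M)"
    by (rule F.real_cond_exp_intg(2))
      (auto intro!: Bochner_Integration.integrable_bound[OF int_eB] simp: h_def indicator_def)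
  also have "\<dots> = (\<integral>\<omega>. indicator (X -` C \<inter> Y -` A \<inter> space M) \<omega> * eB \<omega> \<partial>M)"
    by (rule Bochner_Integration.integral_cong) (auto simp: h_def indicator_def)
  finally show ?thesis unfolding f_def eB_def F_def .
qed

lemma cond_indep_real_cond_exp_indicator:
  fixes X :: "'a \<Rightarrow> 'x::topological_space" and Y :: "'a \<Rightarrow> 'y::topological_space"
    and U :: "'a \<Rightarrow> 'u::topological_space"
  assumes "prob_space M"
    and [measurable]: "X \<in> borel_measurable M" "Y \<in> borel_measurable M" "U \<in> borel_measurable M"
      "B \<in> sets borel"
    and ci: "cond_indep M X Y U"
  shows "AE \<omega> in M. real_cond_exp M (sigma_pair M X Y) (\<lambda>\<omega>. indicator B (U \<omega>)) \<omega>
                   = real_cond_exp M (vimage_algebra (space M) X borel) (\<lambda>\<omega>. indicator B (U \<omega>)) \<omega>"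
proof -
  interpret prob_space M by fact
  define F where "F = vimage_algebra (space M) X borel"
  interpret F: finite_measure_subalgebra M F
    unfolding F_def by unfold_locales (rule subalgebra_vimage_algebra; simp)
  interpret G: finite_measure_subalgebra M "sigma_pair M X Y"
    by unfold_locales (rule subalgebra_sigma_pair; simp)
  define f where "f = (\<lambda>\<omega>. indicator B (U \<omega>) :: real)"
  define eB where "eB = real_cond_exp M F f"
  have int_f: "integrable M f"
    by (rule integrable_const_bound[where B=1]) (auto simp: f_def)
  have int_eB: "integrable M eB" unfolding eB_def by (rule F.real_cond_exp_int(1)[OF int_f])
  have total: "(\<integral>\<omega>. f \<omega> \<partial>M) = (\<integral>\<omega>. eB \<omega> \<partial>M)"
    unfolding eB_def by (rule F.real_cond_exp_int(2)[OF int_f, symmetric])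
  have rectangle: "(\<integral>\<omega>. indicator D \<omega> * f \<omega> \<partial>M) = (\<integral>\<omega>. indicator D \<omega> * eB \<omega> \<partial>M)"
    if "D \<in> pair_rectangles M X Y" for D
    using that cond_indep_integral_rectangle[OF assms(1-5) _ _ ci]
    unfolding pair_rectangles_def f_def eB_def F_def by auto
  have "(\<integral>\<omega>\<in>D. f \<omega> \<partial>M) = (\<integral>\<omega>\<in>D. eB \<omega> \<partial>M)" if "D \<in> sets (sigma_pair M X Y)" for D
    using integral_indicator_eq_sigma_sets[OF Int_stable_pair_rectangles pair_rectangles_subset[OF assms(2,3)] int_f int_eB
        total rectangle] that
    unfolding set_lebesgue_integral_def sets_sigma_pair by simp
  moreover have "eB \<in> borel_measurable (sigma_pair M X Y)"
    unfolding eB_def F_def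
    by (rule measurable_from_subalg[OF subalgebra_vimage_algebra[OF measurable_sigma_pair1]]) simp
  ultimately have "AE \<omega> in M. real_cond_exp M (sigma_pair M X Y) f \<omega> = eB \<omega>"
    using int_f int_eB by (intro G.real_cond_exp_charact) auto
  then show ?thesis unfolding eB_def f_def F_def .
qed

lemma cond_indep_integral_indicator:
  fixes X :: "'a \<Rightarrow> 'x::topological_space" and Y :: "'a \<Rightarrow> 'y::topological_space"
    and U :: "'a \<Rightarrow> 'u::topological_space"
  assumes "prob_space M"
    and [measurable]: "X \<in> borel_measurable M" "Y \<in> borel_measurable M" "U \<in> borel_measurable M"
      "B \<in> sets borel"
    and "cond_indep M X Y U"
    and [measurable]: "k \<in> borel_measurable (sigma_pair M X Y)" and "integrable M k"
  shows "(\<integral>\<omega>. k \<omega> * indicator B (U \<omega>) \<partial>M)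
       = (\<integral>\<omega>. k \<omega> * real_cond_exp M (vimage_algebra (space M) X borel) (\<lambda>\<omega>. indicator B (U \<omega>)) \<omega> \<partial>M)"
proof -
  interpret prob_space M by fact
  interpret G: finite_measure_subalgebra M "sigma_pair M X Y"
    by unfold_locales (rule subalgebra_sigma_pair; simp)
  have [measurable]: "k \<in> borel_measurable M" using \<open>integrable M k\<close> by simp
  have "(\<integral>\<omega>. k \<omega> * indicator B (U \<omega>) \<partial>M)
      = (\<integral>\<omega>. k \<omega> * real_cond_exp M (sigma_pair M X Y) (\<lambda>\<omega>. indicator B (U \<omega>)) \<omega> \<partial>M)"
    by (rule G.real_cond_exp_intg(2)[symmetric])
      (auto intro!: Bochner_Integration.integrable_bound[OF \<open>integrable M k\<close>] simp: indicator_def)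
  also have "\<dots> = (\<integral>\<omega>. k \<omega> * real_cond_exp M (vimage_algebra (space M) X borel) (\<lambda>\<omega>. indicator B (U \<omega>)) \<omega> \<partial>M)"
    using cond_indep_real_cond_exp_indicator[OF assms(1-6)] by (intro integral_cong_AE) auto
  finally show ?thesis .
qed

lemma indep_rv_integral_indicator:
  fixes Z :: "'a \<Rightarrow> real" and T :: "'a \<Rightarrow> 't::topological_space"
  assumes "prob_space M" and [measurable]: "Z \<in> borel_measurable M" "T \<in> borel_measurable M"
    and indep: "indep_rv M Z T"
    and f: "f \<in> borel_measurable (vimage_algebra (space M) T borel)" "integrable M f"
  shows "(\<integral>\<omega>. f \<omega> * indicator {\<omega>\<in>space M. Z \<omega> = z} \<omega> \<partial>M)
       = measure M {\<omega>\<in>space M. Z \<omega> = z} * (\<integral>\<omega>. f \<omega> \<partial>M)"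
proof -
  interpret prob_space M by fact
  define G where "G = vimage_algebra (space M) T borel"
  define Ez where "Ez = {\<omega>\<in>space M. Z \<omega> = z}"
  have [measurable]: "Ez \<in> sets M" unfolding Ez_def by measurable
  have subMG: "subalgebra M G" unfolding G_def by (rule subalgebra_vimage_algebra) simp
  interpret G: finite_measure_subalgebra M G by unfold_locales (rule subMG)
  have int_Ez: "integrable M (indicator Ez :: 'a \<Rightarrow> real)" by (simp add: integrable_indicator_iff less_top[symmetric])
  have Ez_Z: "Ez \<in> sigma_sets (space M) {Z -` A \<inter> space M | A. A \<in> sets borel}"
    by (rule sigma_sets.Basic) (auto simp: Ez_def intro!: exI[of _ "{z}"])
  have cond_prob: "AE \<omega> in M. real_cond_exp M G (indicator Ez) \<omega> = prob Ez"
  proof (rule G.real_cond_exp_charact[OF _ int_Ez])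
    fix D assume D: "D \<in> sets G"
    then have "D \<in> sets M" using subMG by (auto simp: subalgebra_def)
    have "D \<in> sigma_sets (space M) {T -` A \<inter> space M | A. A \<in> sets borel}"
      using D unfolding G_def sets_vimage_algebra .
    with indep Ez_Z have "prob (Ez \<inter> D) = prob Ez * prob D"
      unfolding indep_rv_def by (rule indep_setD)
    then show "(\<integral>\<omega>\<in>D. indicator Ez \<omega> \<partial>M) = (\<integral>\<omega>\<in>D. prob Ez \<partial>M)"
      using \<open>D \<in> sets M\<close> unfolding set_lebesgue_integral_def
      by (simp add: indicator_inter_arith[symmetric] Int_commute)
  qed auto
  have [measurable]: "f \<in> borel_measurable G" using f(1) unfolding G_def .
  have [measurable]: "f \<in> borel_measurable M" using f(2) by simp
  have "(\<integral>\<omega>. f \<omega> * indicator Ez \<omega> \<partial>M) = (\<integral>\<omega>. f \<omega> * real_cond_exp M G (indicator Ez) \<omega> \<partial>M)"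
    by (rule G.real_cond_exp_intg(2)[symmetric]) (auto intro: integrable_real_mult_indicator f(2))
  also have "\<dots> = (\<integral>\<omega>. f \<omega> * prob Ez \<partial>M)"
    by (rule integral_cong_AE) (use cond_prob in auto)
  finally show ?thesis unfolding Ez_def by simp
qed

lemma sets_stratum [measurable]:
  assumes [measurable]: "S1 \<in> borel_measurable M" "S0 \<in> borel_measurable M"
  shows "stratum M S1 S0 s1 s0 \<in> sets M"
  unfolding stratum_def by measurable

lemma real_cond_exp_indicator_strata:
  assumes "prob_space M" and [measurable]: "S1 \<in> borel_measurable M" "S0 \<in> borel_measurable M"
    "X \<in> borel_measurable M" and "finite B"
  shows "AE \<omega> in M. real_cond_exp M (vimage_algebra (space M) X borel) (\<lambda>\<omega>. indicator B (S1 \<omega>, S0 \<omega>)) \<omega>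
                   = (\<Sum>(s1, s0)\<in>B. principal_score M X S1 S0 s1 s0 \<omega>)"
proof -
  interpret prob_space M by fact
  define F where "F = vimage_algebra (space M) X borel"
  interpret F: finite_measure_subalgebra M F
    unfolding F_def by unfold_locales (rule subalgebra_vimage_algebra; simp)
  have [measurable]: "B \<in> sets borel" using \<open>finite B\<close> by (simp add: borel_closed finite_imp_closed)
  define ind where "ind u \<omega> = (indicator {u} (S1 \<omega>, S0 \<omega>) :: real)" for u \<omega>
  have [measurable]: "ind u \<in> borel_measurable M" for u unfolding ind_def by measurable
  have "AE \<omega> in M. real_cond_exp M F (\<lambda>\<omega>. indicator B (S1 \<omega>, S0 \<omega>)) \<omega>
      = real_cond_exp M F (\<lambda>\<omega>. \<Sum>u\<in>B. ind u \<omega>) \<omega>"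
  proof (rule F.real_cond_exp_cong)
    show "AE \<omega> in M. indicator B (S1 \<omega>, S0 \<omega>) = (\<Sum>u\<in>B. ind u \<omega>)"
      using \<open>finite B\<close> by (simp add: ind_def indicator_def)
  qed measurable
  moreover have "AE \<omega> in M. real_cond_exp M F (\<lambda>\<omega>. \<Sum>u\<in>B. ind u \<omega>) \<omega> = (\<Sum>u\<in>B. real_cond_exp M F (ind u) \<omega>)"
    by (rule F.real_cond_exp_sum) (auto intro: integrable_const_bound[where B=1] simp: ind_def)
  moreover have "AE \<omega> in M. \<forall>u\<in>B. real_cond_exp M F (ind u) \<omega> = principal_score M X S1 S0 (fst u) (snd u) \<omega>"
    unfolding AE_finite_all[OF \<open>finite B\<close>] principal_score_def F_def[symmetric]
    by (intro ballI F.real_cond_exp_cong) (auto simp: ind_def stratum_def indicator_def)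
  ultimately show ?thesis unfolding F_def[symmetric]
    by eventually_elim (simp add: case_prod_beta)
qed

text \<open>(c1, c0) is the stratum observed together with (1,0): (1,1) in the arm Z = 1, (0,0) in the arm Z = 0.\<close>

definition principal_weight ::
    "'a measure \<Rightarrow> ('a \<Rightarrow> 'x::topological_space) \<Rightarrow> ('a \<Rightarrow> real) \<Rightarrow> ('a \<Rightarrow> real) \<Rightarrow> real \<Rightarrow> real \<Rightarrow> 'a \<Rightarrow> real" where
  "principal_weight M X S1 S0 c1 c0 \<omega> =
     (principal_score M X S1 S0 1 0 \<omega> / (principal_score M X S1 S0 1 0 \<omega> + principal_score M X S1 S0 c1 c0 \<omega>))
     / (principal_prop M S1 S0 1 0 / (principal_prop M S1 S0 1 0 + principal_prop M S1 S0 c1 c0))"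

lemma principal_weight_mult_pooled_score:
  assumes "principal_prop M S1 S0 1 0 \<noteq> 0"
    and "principal_score M X S1 S0 1 0 \<omega> + principal_score M X S1 S0 c1 c0 \<omega> \<noteq> 0"
  shows "principal_weight M X S1 S0 c1 c0 \<omega> * (principal_score M X S1 S0 1 0 \<omega> + principal_score M X S1 S0 c1 c0 \<omega>)
       = (principal_prop M S1 S0 1 0 + principal_prop M S1 S0 c1 c0) / principal_prop M S1 S0 1 0
         * principal_score M X S1 S0 1 0 \<omega>"
  using assms by (simp add: principal_weight_def divide_divide_eq_right)

lemma measurable_principal_weight [measurable]:
  "principal_weight M X S1 S0 c1 c0 \<in> borel_measurable (vimage_algebra (space M) X borel)"
  unfolding principal_weight_def[abs_def] principal_score_def by measurable

lemma principal_weight_bounded: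
  assumes "prob_space M" and [measurable]: "S1 \<in> borel_measurable M" "S0 \<in> borel_measurable M"
    "X \<in> borel_measurable M"
    and pos: "principal_prop M S1 S0 1 0 > 0"
      "AE \<omega> in M. principal_score M X S1 S0 1 0 \<omega> + principal_score M X S1 S0 c1 c0 \<omega> > 0"
  shows "AE \<omega> in M. \<bar>principal_weight M X S1 S0 c1 c0 \<omega>\<bar>
           \<le> (principal_prop M S1 S0 1 0 + principal_prop M S1 S0 c1 c0) / principal_prop M S1 S0 1 0"
proof -
  interpret prob_space M by fact
  interpret F: finite_measure_subalgebra M "vimage_algebra (space M) X borel"
    by unfold_locales (rule subalgebra_vimage_algebra; simp)
  define e10 e where "e10 = principal_score M X S1 S0 1 0" and "e = principal_score M X S1 S0 c1 c0"
  define K where "K = (principal_prop M S1 S0 1 0 + principal_prop M S1 S0 c1 c0) / principal_prop M S1 S0 1 0"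
  have "K \<ge> 0" unfolding K_def using pos(1) by (simp add: principal_prop_def)
  have nonneg: "AE \<omega> in M. principal_score M X S1 S0 s1 s0 \<omega> \<ge> 0" for s1 s0
    unfolding principal_score_def by (rule F.real_cond_exp_pos) (auto simp: stratum_def)
  from nonneg[of 1 0] nonneg[of c1 c0] pos(2)
  have "AE \<omega> in M. \<bar>e10 \<omega> / (e10 \<omega> + e \<omega>) * K\<bar> \<le> K"
  proof eventually_elim
    case (elim \<omega>)
    then have "0 \<le> e10 \<omega> / (e10 \<omega> + e \<omega>)" "e10 \<omega> / (e10 \<omega> + e \<omega>) \<le> 1"
      by (auto simp: e10_def e_def)
    with \<open>K \<ge> 0\<close> show ?case
      by (simp only: abs_mult abs_of_nonneg) (rule mult_left_le_one_le)
  qed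
  then show ?thesis unfolding e10_def e_def K_def by (simp add: principal_weight_def)
qed

lemma integrable_principal_weight_scaleR:
  fixes f :: "'a \<Rightarrow> 'b::{banach,second_countable_topology}"
  assumes "prob_space M" and [measurable]: "S1 \<in> borel_measurable M" "S0 \<in> borel_measurable M"
    "X \<in> borel_measurable M"
    and "principal_prop M S1 S0 1 0 > 0"
      "AE \<omega> in M. principal_score M X S1 S0 1 0 \<omega> + principal_score M X S1 S0 c1 c0 \<omega> > 0"
    and f: "integrable M f"
  shows "integrable M (\<lambda>\<omega>. principal_weight M X S1 S0 c1 c0 \<omega> *\<^sub>R f \<omega>)"
proof (rule Bochner_Integration.integrable_bound)
  let ?K = "(principal_prop M S1 S0 1 0 + principal_prop M S1 S0 c1 c0) / principal_prop M S1 S0 1 0"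
  show "integrable M (\<lambda>\<omega>. ?K *\<^sub>R f \<omega>)" using f by simp
  have "principal_weight M X S1 S0 c1 c0 \<in> borel_measurable M"
    by (rule measurable_from_subalg[OF subalgebra_vimage_algebra[of X]]) simp_all
  with f show "(\<lambda>\<omega>. principal_weight M X S1 S0 c1 c0 \<omega> *\<^sub>R f \<omega>) \<in> borel_measurable M" by simp
  have "?K \<ge> 0" using assms(5) by (simp add: principal_prop_def)
  from principal_weight_bounded[OF assms(1-6)]
  show "AE \<omega> in M. norm (principal_weight M X S1 S0 c1 c0 \<omega> *\<^sub>R f \<omega>) \<le> norm (?K *\<^sub>R f \<omega>)"
    by eventually_elim (simp only: norm_scaleR abs_of_nonneg[OF \<open>?K \<ge> 0\<close>] mult_right_mono norm_ge_zero)
qed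

lemma principal_weight_reweighting:
  fixes X :: "'a \<Rightarrow> 'x::topological_space" and Y :: "'a \<Rightarrow> 'y::topological_space"
  assumes "prob_space M"
    and [measurable]: "S1 \<in> borel_measurable M" "S0 \<in> borel_measurable M" "X \<in> borel_measurable M"
      "Y \<in> borel_measurable M"
    and ci: "cond_indep M X Y (\<lambda>\<omega>. (S1 \<omega>, S0 \<omega>))"
    and other: "(c1, c0) \<noteq> (1, 0)"
    and pos: "principal_prop M S1 S0 1 0 > 0"
      "AE \<omega> in M. principal_score M X S1 S0 1 0 \<omega> + principal_score M X S1 S0 c1 c0 \<omega> > 0"
    and g_XY: "g \<in> borel_measurable (sigma_pair M X Y)" and g: "integrable M g"
  shows "(\<integral>\<omega>. principal_weight M X S1 S0 c1 c0 \<omega> * g \<omega> * indicator {(1, 0), (c1, c0)} (S1 \<omega>, S0 \<omega>) \<partial>M)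
       = (principal_prop M S1 S0 1 0 + principal_prop M S1 S0 c1 c0) / principal_prop M S1 S0 1 0
         * (\<integral>\<omega>. indicator (stratum M S1 S0 1 0) \<omega> * g \<omega> \<partial>M)"
proof -
  define F where "F = vimage_algebra (space M) X borel"
  define w where "w = principal_weight M X S1 S0 c1 c0"
  define e where "e = principal_score M X S1 S0"
  define K where "K = (principal_prop M S1 S0 1 0 + principal_prop M S1 S0 c1 c0) / principal_prop M S1 S0 1 0"
  note integral_cond_exp = cond_indep_integral_indicator[OF assms(1,4,5) _ _ ci, folded F_def]
  have w_XY: "w \<in> borel_measurable (sigma_pair M X Y)"
    unfolding w_def
    by (rule measurable_from_subalg[OF subalgebra_vimage_algebra[OF measurable_sigma_pair1]]) simp
  have [measurable]: "w \<in> borel_measurable M" "g \<in> borel_measurable M"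
    using measurable_from_subalg[OF subalgebra_sigma_pair[of X M Y]] w_XY g_XY by simp_all
  have wg: "integrable M (\<lambda>\<omega>. w \<omega> * g \<omega>)"
    using integrable_principal_weight_scaleR[OF assms(1-4) pos g] unfolding w_def by simp
  note scores = real_cond_exp_indicator_strata[OF assms(1-4), folded F_def e_def]
  have pooled: "AE \<omega> in M. real_cond_exp M F (\<lambda>\<omega>. indicator {(1, 0), (c1, c0)} (S1 \<omega>, S0 \<omega>)) \<omega>
      = e 1 0 \<omega> + e c1 c0 \<omega>"
    using scores[of "{(1, 0), (c1, c0)}"] other by simp
  have single: "AE \<omega> in M. real_cond_exp M F (\<lambda>\<omega>. indicator {(1, 0)} (S1 \<omega>, S0 \<omega>)) \<omega> = e 1 0 \<omega>"
    using scores[of "{(1, 0)}"] by simp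
  have "(\<integral>\<omega>. w \<omega> * g \<omega> * indicator {(1, 0), (c1, c0)} (S1 \<omega>, S0 \<omega>) \<partial>M)
      = (\<integral>\<omega>. w \<omega> * g \<omega> * real_cond_exp M F (\<lambda>\<omega>. indicator {(1, 0), (c1, c0)} (S1 \<omega>, S0 \<omega>)) \<omega> \<partial>M)"
    using w_XY g_XY by (intro integral_cond_exp wg) auto
  also have "\<dots> = (\<integral>\<omega>. K * (g \<omega> * e 1 0 \<omega>) \<partial>M)"
  proof (rule integral_cong_AE)
    show "AE \<omega> in M. w \<omega> * g \<omega> * real_cond_exp M F (\<lambda>\<omega>. indicator {(1, 0), (c1, c0)} (S1 \<omega>, S0 \<omega>)) \<omega>
        = K * (g \<omega> * e 1 0 \<omega>)"
      using pooled pos(2)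
    proof eventually_elim
      case (elim \<omega>)
      with pos(1) have "w \<omega> * (e 1 0 \<omega> + e c1 c0 \<omega>) = K * e 1 0 \<omega>"
        unfolding w_def e_def K_def by (intro principal_weight_mult_pooled_score) auto
      with elim(1) show ?case by (simp add: ac_simps)
    qed
  qed (simp_all add: F_def e_def principal_score_def)
  also have "\<dots> = K * (\<integral>\<omega>. g \<omega> * e 1 0 \<omega> \<partial>M)" by simp
  also have "(\<integral>\<omega>. g \<omega> * e 1 0 \<omega> \<partial>M)
      = (\<integral>\<omega>. g \<omega> * real_cond_exp M F (\<lambda>\<omega>. indicator {(1, 0)} (S1 \<omega>, S0 \<omega>)) \<omega> \<partial>M)"
  proof (rule integral_cong_AE)
    show "AE \<omega> in M. g \<omega> * e 1 0 \<omega> = g \<omega> * real_cond_exp M F (\<lambda>\<omega>. indicator {(1, 0)} (S1 \<omega>, S0 \<omega>)) \<omega>"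
      using single by eventually_elim simp
  qed (simp_all add: F_def e_def principal_score_def)
  also have "\<dots> = (\<integral>\<omega>. g \<omega> * indicator {(1, 0)} (S1 \<omega>, S0 \<omega>) \<partial>M)"
    using g_XY by (subst integral_cond_exp[symmetric]) (auto intro: g)
  also have "(\<integral>\<omega>. g \<omega> * indicator {(1, 0)} (S1 \<omega>, S0 \<omega>) \<partial>M) = (\<integral>\<omega>. indicator (stratum M S1 S0 1 0) \<omega> * g \<omega> \<partial>M)"
    by (rule Bochner_Integration.integral_cong) (auto simp: stratum_def indicator_def)
  finally show ?thesis unfolding w_def K_def .
qed

lemma measure_observed_cell:
  fixes T :: "'a \<Rightarrow> 't::topological_space" and Z S1 S0 Sz Sobs :: "'a \<Rightarrow> real"
  assumes "prob_space M"
    and [measurable]: "Z \<in> borel_measurable M" "S1 \<in> borel_measurable M" "S0 \<in> borel_measurable M"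
      "T \<in> borel_measurable M"
    and indep: "indep_rv M Z T" and Sz_T: "Sz \<in> borel_measurable (vimage_algebra (space M) T borel)"
    and cell: "AE \<omega> in M. Sz \<omega> = s \<longleftrightarrow> (S1 \<omega>, S0 \<omega>) \<in> {(1, 0), (c1, c0)}"
    and other: "(c1, c0) \<noteq> (1, 0)"
    and obs: "\<forall>\<omega>\<in>space M. Z \<omega> = z \<longrightarrow> Sobs \<omega> = Sz \<omega>"
  shows "measure M {\<omega>\<in>space M. Z \<omega> = z \<and> Sobs \<omega> = s}
       = measure M {\<omega>\<in>space M. Z \<omega> = z} * (principal_prop M S1 S0 1 0 + principal_prop M S1 S0 c1 c0)"
proof -
  interpret prob_space M by fact
  have [measurable]: "Sz \<in> borel_measurable M"
    using measurable_from_subalg[OF subalgebra_vimage_algebra[of T M] Sz_T] by simp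
  have cell_eq: "{\<omega>\<in>space M. Z \<omega> = z \<and> Sobs \<omega> = s} = {\<omega>\<in>space M. Z \<omega> = z \<and> Sz \<omega> = s}"
    using obs by auto
  have "prob {\<omega>\<in>space M. Z \<omega> = z \<and> Sz \<omega> = s} = (\<integral>\<omega>. indicator {\<omega>\<in>space M. Z \<omega> = z \<and> Sz \<omega> = s} \<omega> \<partial>M)"
    by simp
  also have "\<dots> = (\<integral>\<omega>. indicator {s} (Sz \<omega>) * indicator {\<omega>\<in>space M. Z \<omega> = z} \<omega> \<partial>M)"
    by (rule Bochner_Integration.integral_cong) (auto simp: indicator_def)
  also have "\<dots> = prob {\<omega>\<in>space M. Z \<omega> = z} * (\<integral>\<omega>. indicator {s} (Sz \<omega>) \<partial>M)"
    using Sz_T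
    by (intro indep_rv_integral_indicator[OF assms(1,2,5) indep])
      (auto intro!: integrable_const_bound[where B=1])
  also have "(\<integral>\<omega>. indicator {s} (Sz \<omega>) \<partial>M)
      = (\<integral>\<omega>. indicator (stratum M S1 S0 1 0) \<omega> + indicator (stratum M S1 S0 c1 c0) \<omega> \<partial>M)"
    by (rule integral_cong_AE) (use cell other in \<open>auto simp: stratum_def indicator_def\<close>)
  also have "\<dots> = principal_prop M S1 S0 1 0 + principal_prop M S1 S0 c1 c0"
    unfolding principal_prop_def
    by (subst Bochner_Integration.integral_add) (auto intro!: integrable_const_bound[where B=1])
  finally show ?thesis unfolding cell_eq .
qed

lemma cexp_event_principal_weight:
  fixes X :: "'a \<Rightarrow> 'x::topological_space" and Y :: "'a \<Rightarrow> 'y::topological_space"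
    and T :: "'a \<Rightarrow> 't::topological_space" and Z S1 S0 Sz Sobs g gobs :: "'a \<Rightarrow> real"
  assumes "prob_space M"
    and [measurable]: "Z \<in> borel_measurable M" "S1 \<in> borel_measurable M" "S0 \<in> borel_measurable M"
      "X \<in> borel_measurable M" "Y \<in> borel_measurable M" "T \<in> borel_measurable M"
    and indep: "indep_rv M Z T"
    and T_meas: "Sz \<in> borel_measurable (vimage_algebra (space M) T borel)"
      "X \<in> borel_measurable (vimage_algebra (space M) T borel)"
      "g \<in> borel_measurable (vimage_algebra (space M) T borel)"
    and g_XY: "g \<in> borel_measurable (sigma_pair M X Y)" and g: "integrable M g"
    and ci: "cond_indep M X Y (\<lambda>\<omega>. (S1 \<omega>, S0 \<omega>))"
    and cell: "AE \<omega> in M. Sz \<omega> = s \<longleftrightarrow> (S1 \<omega>, S0 \<omega>) \<in> {(1, 0), (c1, c0)}"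
    and other: "(c1, c0) \<noteq> (1, 0)"
    and obs: "\<forall>\<omega>\<in>space M. Z \<omega> = z \<longrightarrow> Sobs \<omega> = Sz \<omega> \<and> gobs \<omega> = g \<omega>"
    and pos: "principal_prop M S1 S0 1 0 > 0"
      "measure M {\<omega>\<in>space M. Z \<omega> = z \<and> Sobs \<omega> = s} > 0"
      "AE \<omega> in M. principal_score M X S1 S0 1 0 \<omega> + principal_score M X S1 S0 c1 c0 \<omega> > 0"
  shows "cexp_event M g (stratum M S1 S0 1 0)
       = cexp_event M (\<lambda>\<omega>. principal_weight M X S1 S0 c1 c0 \<omega> * gobs \<omega>) {\<omega>\<in>space M. Z \<omega> = z \<and> Sobs \<omega> = s}"
proof -
  interpret prob_space M by fact
  define w where "w = principal_weight M X S1 S0 c1 c0"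
  define cell_event where "cell_event = {\<omega>\<in>space M. Z \<omega> = z \<and> Sobs \<omega> = s}"
  define pz where "pz = prob {\<omega>\<in>space M. Z \<omega> = z}"
  define p10 pc where "p10 = principal_prop M S1 S0 1 0" and "pc = principal_prop M S1 S0 c1 c0"
  define I where "I = (\<integral>\<omega>. indicator (stratum M S1 S0 1 0) \<omega> * g \<omega> \<partial>M)"
  have subT: "subalgebra M (vimage_algebra (space M) T borel)" by (rule subalgebra_vimage_algebra) simp
  have w_T: "w \<in> borel_measurable (vimage_algebra (space M) T borel)"
    unfolding w_def
    by (rule measurable_from_subalg[OF subalgebra_vimage_algebra[OF T_meas(2)]])
      (simp add: measurable_principal_weight)
  have [measurable]: "w \<in> borel_measurable M" "Sz \<in> borel_measurable M" "g \<in> borel_measurable M"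
    using measurable_from_subalg[OF subT] w_T T_meas by blast+
  have wg: "integrable M (\<lambda>\<omega>. w \<omega> * g \<omega>)"
    using integrable_principal_weight_scaleR[OF assms(1,3-5) pos(1,3) g] unfolding w_def by simp
  have "(\<integral>\<omega>. indicator cell_event \<omega> * (w \<omega> * gobs \<omega>) \<partial>M)
      = (\<integral>\<omega>. indicator {s} (Sz \<omega>) * w \<omega> * g \<omega> * indicator {\<omega>\<in>space M. Z \<omega> = z} \<omega> \<partial>M)"
    by (rule Bochner_Integration.integral_cong) (use obs in \<open>auto simp: cell_event_def indicator_def\<close>)
  also have "\<dots> = pz * (\<integral>\<omega>. indicator {s} (Sz \<omega>) * w \<omega> * g \<omega> \<partial>M)"
    unfolding pz_def using T_meas w_T
    by (intro indep_rv_integral_indicator[OF assms(1,2,7) indep] Bochner_Integration.integrable_bound[OF wg])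
      (auto simp: indicator_def abs_mult)
  also have "(\<integral>\<omega>. indicator {s} (Sz \<omega>) * w \<omega> * g \<omega> \<partial>M)
      = (\<integral>\<omega>. w \<omega> * g \<omega> * indicator {(1, 0), (c1, c0)} (S1 \<omega>, S0 \<omega>) \<partial>M)"
    by (rule integral_cong_AE) (use cell in \<open>auto simp: indicator_def\<close>)
  also have "\<dots> = (p10 + pc) / p10 * I"
    unfolding w_def p10_def pc_def I_def
    by (rule principal_weight_reweighting[OF assms(1,3-6) ci other pos(1,3) g_XY g])
  finally have num: "(\<integral>\<omega>. indicator cell_event \<omega> * (w \<omega> * gobs \<omega>) \<partial>M) = pz * ((p10 + pc) / p10 * I)" .
  have den: "prob cell_event = pz * (p10 + pc)"
    using measure_observed_cell[OF assms(1-4,7) indep T_meas(1) cell other] obs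
    unfolding cell_event_def pz_def p10_def pc_def by auto
  have "pz \<noteq> 0" using pos(2) den unfolding cell_event_def by auto
  have "p10 + pc \<noteq> 0" using pos(1) unfolding p10_def pc_def principal_prop_def
    by (metis add_pos_nonneg less_irrefl measure_nonneg)
  have "cexp_event M g (stratum M S1 S0 1 0) = I / p10"
    unfolding cexp_event_def I_def p10_def principal_prop_def by (simp add: divide_inverse mult.commute)
  also have "\<dots> = pz * ((p10 + pc) / p10 * I) / (pz * (p10 + pc))"
    using \<open>pz \<noteq> 0\<close> \<open>p10 + pc \<noteq> 0\<close> by simp
  also have "\<dots> = cexp_event M (\<lambda>\<omega>. w \<omega> * gobs \<omega>) cell_event"
    unfolding cexp_event_def num[symmetric] den[symmetric] by (simp add: divide_inverse mult.commute)
  finally show ?thesis unfolding w_def cell_event_def .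
qed

lemma cexp_event_inner_left:
  fixes f :: "'a \<Rightarrow> 'b::euclidean_space"
  assumes "integrable M f" "A \<in> sets M"
  shows "cexp_event M f A \<bullet> c = cexp_event M (\<lambda>\<omega>. f \<omega> \<bullet> c) A"
  using integrable_mult_indicator[OF assms(2,1)] unfolding cexp_event_def
  by (simp add: integral_inner_left[symmetric] del: integral_inner_left)

lemma cexp_event_stratum_reweighting:
  fixes M :: "'a measure" and X :: "'a \<Rightarrow> 'x::euclidean_space" and \<beta> :: 'x and T :: "'a \<Rightarrow> 't::topological_space"
    and Z S1 S0 Sz Sobs Yz Yobs :: "'a \<Rightarrow> real" and z s c1 c0 :: real
  defines "A \<equiv> stratum M S1 S0 1 0" and "Ev \<equiv> {\<omega>\<in>space M. Z \<omega> = z \<and> Sobs \<omega> = s}"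
    and "w \<equiv> principal_weight M X S1 S0 c1 c0"
  assumes prob: "prob_space M"
    and meas [measurable]: "Z \<in> borel_measurable M" "S1 \<in> borel_measurable M" "S0 \<in> borel_measurable M"
      "X \<in> borel_measurable M" "Yz \<in> borel_measurable M" "T \<in> borel_measurable M"
    and indep: "indep_rv M Z T"
    and T_meas [measurable]: "Sz \<in> borel_measurable (vimage_algebra (space M) T borel)"
      "X \<in> borel_measurable (vimage_algebra (space M) T borel)"
      "Yz \<in> borel_measurable (vimage_algebra (space M) T borel)"
    and integ: "integrable M Yz" "integrable M X"
    and ci: "cond_indep M X Yz (\<lambda>\<omega>. (S1 \<omega>, S0 \<omega>))"
    and cell: "AE \<omega> in M. Sz \<omega> = s \<longleftrightarrow> (S1 \<omega>, S0 \<omega>) \<in> {(1, 0), (c1, c0)}"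
    and other: "(c1, c0) \<noteq> (1, 0)"
    and obs: "\<forall>\<omega>\<in>space M. Z \<omega> = z \<longrightarrow> Sobs \<omega> = Sz \<omega> \<and> Yobs \<omega> = Yz \<omega>"
    and pos: "principal_prop M S1 S0 1 0 > 0" "measure M Ev > 0"
      "AE \<omega> in M. principal_score M X S1 S0 1 0 \<omega> + principal_score M X S1 S0 c1 c0 \<omega> > 0"
  shows "cexp_event M (\<lambda>\<omega>. Yz \<omega> - \<beta> \<bullet> X \<omega>) A = cexp_event M (\<lambda>\<omega>. w \<omega> * (Yobs \<omega> - \<beta> \<bullet> X \<omega>)) Ev"
    and "cexp_event M X A = cexp_event M (\<lambda>\<omega>. w \<omega> *\<^sub>R X \<omega>) Ev"
proof -
  note reweight = cexp_event_principal_weight[OF prob meas indep T_meas(1,2) _ _ _ ci cell other _ pos[unfolded Ev_def],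
      folded A_def Ev_def w_def]
  have [measurable]: "X \<in> borel_measurable (sigma_pair M X Yz)" "Yz \<in> borel_measurable (sigma_pair M X Yz)"
    by (rule measurable_sigma_pair1 measurable_sigma_pair2)+
  show "cexp_event M (\<lambda>\<omega>. Yz \<omega> - \<beta> \<bullet> X \<omega>) A = cexp_event M (\<lambda>\<omega>. w \<omega> * (Yobs \<omega> - \<beta> \<bullet> X \<omega>)) Ev"
    by (rule reweight) (measurable, measurable, use integ obs in auto)
  have coordinate: "cexp_event M (\<lambda>\<omega>. X \<omega> \<bullet> b) A = cexp_event M (\<lambda>\<omega>. w \<omega> * (X \<omega> \<bullet> b)) Ev" for b
    by (rule reweight) (measurable, measurable, use integ obs in auto)
  have [measurable]: "Sz \<in> borel_measurable M"
    using measurable_from_subalg[OF subalgebra_vimage_algebra[of T M] T_meas(1)] by simp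
  have Ev_eq: "Ev = {\<omega>\<in>space M. Z \<omega> = z \<and> Sz \<omega> = s}" using obs by (auto simp: Ev_def)
  have "Ev \<in> sets M" unfolding Ev_eq by measurable
  have wX: "integrable M (\<lambda>\<omega>. w \<omega> *\<^sub>R X \<omega>)"
    unfolding w_def by (rule integrable_principal_weight_scaleR[OF prob meas(2-4) pos(1,3) integ(2)])
  show "cexp_event M X A = cexp_event M (\<lambda>\<omega>. w \<omega> *\<^sub>R X \<omega>) Ev"
  proof (rule euclidean_eqI)
    fix b :: 'x
    have "cexp_event M X A \<bullet> b = cexp_event M (\<lambda>\<omega>. X \<omega> \<bullet> b) A"
      unfolding A_def by (rule cexp_event_inner_left[OF integ(2)]) measurable
    also have "\<dots> = cexp_event M (\<lambda>\<omega>. w \<omega> * (X \<omega> \<bullet> b)) Ev" by (rule coordinate)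
    also have "\<dots> = cexp_event M (\<lambda>\<omega>. w \<omega> *\<^sub>R X \<omega>) Ev \<bullet> b"
      by (subst cexp_event_inner_left[OF wX \<open>Ev \<in> sets M\<close>]) simp
    finally show "cexp_event M X A \<bullet> b = cexp_event M (\<lambda>\<omega>. w \<omega> *\<^sub>R X \<omega>) Ev \<bullet> b" .
  qed
qed

theorem corollary3:
  fixes M :: "'a measure"
    and Z S1 S0 Y1 Y0 :: "'a \<Rightarrow> real"
    and X :: "'a \<Rightarrow> real ^ 'd"
    and \<beta>1 \<beta>0 :: "real ^ 'd"
  defines "S \<equiv> observed Z S1 S0"
      and "Y \<equiv> observed Z Y1 Y0"
      and "U \<equiv> (\<lambda>\<omega>. (S1 \<omega>, S0 \<omega>))"
      and "e \<equiv> principal_score M X S1 S0"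
      and "\<pi> \<equiv> principal_prop M S1 S0"
  defines "w1 \<equiv> (\<lambda>\<omega>. (e 1 0 \<omega> / (e 1 0 \<omega> + e 1 1 \<omega>)) / (\<pi> 1 0 / (\<pi> 1 0 + \<pi> 1 1)))"
      and "w0 \<equiv> (\<lambda>\<omega>. (e 1 0 \<omega> / (e 1 0 \<omega> + e 0 0 \<omega>)) / (\<pi> 1 0 / (\<pi> 1 0 + \<pi> 0 0)))"
  assumes prob: "prob_space M"
    and meas: "Z \<in> borel_measurable M" "S1 \<in> borel_measurable M" "S0 \<in> borel_measurable M"
              "Y1 \<in> borel_measurable M" "Y0 \<in> borel_measurable M" "X \<in> borel_measurable M"
    and binary: "\<forall>\<omega>\<in>space M. Z \<omega> \<in> {0,1} \<and> S1 \<omega> \<in> {0,1} \<and> S0 \<omega> \<in> {0,1}"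
    and integ: "integrable M Y1" "integrable M Y0" "integrable M X"
    and randomization: "indep_rv M Z (\<lambda>\<omega>. (S1 \<omega>, S0 \<omega>, Y1 \<omega>, Y0 \<omega>, X \<omega>))"
    and monotonicity: "AE \<omega> in M. S1 \<omega> \<ge> S0 \<omega>"
    and ignorability: "cond_indep M X Y1 U" "cond_indep M X Y0 U"
    and pos_events: "\<pi> 1 0 > 0"
        "measure M {\<omega>\<in>space M. Z \<omega> = 1 \<and> S \<omega> = 1} > 0"
        "measure M {\<omega>\<in>space M. Z \<omega> = 0 \<and> S \<omega> = 0} > 0"
    and pos_denoms: "\<pi> 1 0 + \<pi> 1 1 > 0" "\<pi> 1 0 + \<pi> 0 0 > 0"
        "AE \<omega> in M. e 1 0 \<omega> + e 1 1 \<omega> > 0"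
        "AE \<omega> in M. e 1 0 \<omega> + e 0 0 \<omega> > 0"
  shows "(cexp_event M (\<lambda>\<omega>. Y1 \<omega> - \<beta>1 \<bullet> X \<omega>) (stratum M S1 S0 1 0)
           = cexp_event M (\<lambda>\<omega>. w1 \<omega> * (Y \<omega> - \<beta>1 \<bullet> X \<omega>)) {\<omega>\<in>space M. Z \<omega> = 1 \<and> S \<omega> = 1}) \<and>
         (cexp_event M (\<lambda>\<omega>. Y0 \<omega> - \<beta>0 \<bullet> X \<omega>) (stratum M S1 S0 1 0)
           = cexp_event M (\<lambda>\<omega>. w0 \<omega> * (Y \<omega> - \<beta>0 \<bullet> X \<omega>)) {\<omega>\<in>space M. Z \<omega> = 0 \<and> S \<omega> = 0}) \<and>
         (cexp_event M X (stratum M S1 S0 1 0)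
           = cexp_event M (\<lambda>\<omega>. w1 \<omega> *\<^sub>R X \<omega>) {\<omega>\<in>space M. Z \<omega> = 1 \<and> S \<omega> = 1}) \<and>
         (cexp_event M (\<lambda>\<omega>. w1 \<omega> *\<^sub>R X \<omega>) {\<omega>\<in>space M. Z \<omega> = 1 \<and> S \<omega> = 1}
           = cexp_event M (\<lambda>\<omega>. w0 \<omega> *\<^sub>R X \<omega>) {\<omega>\<in>space M. Z \<omega> = 0 \<and> S \<omega> = 0})"
proof -
  define T where "T = (\<lambda>\<omega>. (S1 \<omega>, S0 \<omega>, Y1 \<omega>, Y0 \<omega>, X \<omega>))"
  have "T \<in> borel_measurable M" unfolding T_def using meas by measurable
  have T_meas: "S1 \<in> borel_measurable (vimage_algebra (space M) T borel)"
    "S0 \<in> borel_measurable (vimage_algebra (space M) T borel)"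
    "Y1 \<in> borel_measurable (vimage_algebra (space M) T borel)"
    "Y0 \<in> borel_measurable (vimage_algebra (space M) T borel)"
    "X \<in> borel_measurable (vimage_algebra (space M) T borel)"
    using measurable_vimage_algebra_continuous[of fst T M]
      measurable_vimage_algebra_continuous[of "\<lambda>t. fst (snd t)" T M]
      measurable_vimage_algebra_continuous[of "\<lambda>t. fst (snd (snd t))" T M]
      measurable_vimage_algebra_continuous[of "\<lambda>t. fst (snd (snd (snd t)))" T M]
      measurable_vimage_algebra_continuous[of "\<lambda>t. snd (snd (snd (snd t)))" T M]
    by (simp_all add: T_def continuous_intros)
  have "w1 = principal_weight M X S1 S0 1 1" "w0 = principal_weight M X S1 S0 0 0"
    by (simp_all add: fun_eq_iff w1_def w0_def e_def \<pi>_def principal_weight_def)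
  have "indep_rv M Z T" using randomization unfolding T_def .
  note arm = cexp_event_stratum_reweighting[OF prob meas(1-3,6) _ \<open>T \<in> borel_measurable M\<close> \<open>indep_rv M Z T\<close>]
  have arm1: "cexp_event M (\<lambda>\<omega>. Y1 \<omega> - \<beta> \<bullet> X \<omega>) (stratum M S1 S0 1 0)
           = cexp_event M (\<lambda>\<omega>. w1 \<omega> * (Y \<omega> - \<beta> \<bullet> X \<omega>)) {\<omega>\<in>space M. Z \<omega> = 1 \<and> S \<omega> = 1}"
    "cexp_event M X (stratum M S1 S0 1 0) = cexp_event M (\<lambda>\<omega>. w1 \<omega> *\<^sub>R X \<omega>) {\<omega>\<in>space M. Z \<omega> = 1 \<and> S \<omega> = 1}"
    for \<beta>
    unfolding \<open>w1 = _\<close>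
    using binary pos_events pos_denoms ignorability(1)
    by (intro arm[where Yz = Y1 and Sz = S1] meas T_meas integ; auto simp: U_def e_def \<pi>_def S_def Y_def observed_def)+
  have arm0: "cexp_event M (\<lambda>\<omega>. Y0 \<omega> - \<beta> \<bullet> X \<omega>) (stratum M S1 S0 1 0)
           = cexp_event M (\<lambda>\<omega>. w0 \<omega> * (Y \<omega> - \<beta> \<bullet> X \<omega>)) {\<omega>\<in>space M. Z \<omega> = 0 \<and> S \<omega> = 0}"
    "cexp_event M X (stratum M S1 S0 1 0) = cexp_event M (\<lambda>\<omega>. w0 \<omega> *\<^sub>R X \<omega>) {\<omega>\<in>space M. Z \<omega> = 0 \<and> S \<omega> = 0}"
    for \<beta>
    unfolding \<open>w0 = _\<close>
    using binary pos_events pos_denoms ignorability(2)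
    by (intro arm[where Yz = Y0 and Sz = S0] meas T_meas integ; auto simp: U_def e_def \<pi>_def S_def Y_def observed_def)+
  show ?thesis using arm1 arm0 by simp
qed

end
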